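(* Let $K$ be a division ring and $M,N\ge2$ integers. Let $G$ be a group and let $c,d\in K[G]$ have ranks $M$ and $N$ respectively, both contain the identity of $G$ in their supports, and satisfy $cd=1$. Write $c=r_0c_0+\dots+r_{M-1}c_{M-1}$ and $d=s_0d_0+\dots+s_{N-1}d_{N-1}$ with pairwise distinct $c_i\in G$, pairwise distinct $d_j\in G$, nonzero $r_i,s_j\in K$, and $c_0=d_0=1$. Let $\sigma$ be the partition of $\{0,\dots,M-1\}\times\{0,\dots,N-1\}$ with $(i,j)\sim_\sigma(i',j')$ iff $c_id_j=c_{i'}d_{j'}$. (a) Suppose that for every $m$ with $2\le m<M$, every group $G'$ and all $x,y\in K[G']$ of ranks $m$ and $N$, $xy=1$ implies $yx=1$. Then $\sigma$ is row connected; moreover every partition $\pi\le\sigma$ that is realizable with $r_0,\dots,r_{M-1},s_0,\dots,s_{N-1}$ is row connected. (b) Suppose that for every $n$ with $2\le n<N$, every group $G'$ and all $x,y\in K[G']$ of ranks $M$ and $n$, $xy=1$ implies $yx=1$. Then $\sigma$ is column connected; moreover every partition $\pi\le\sigma$ that is realizable with $r_0,\dots,r_{M-1},s_0,\dots,s_{N-1}$ is column connected.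
   Context: $K[G]$ is the group ring; the rank of an element is the number of group elements with nonzero coefficient (its support). For a partition $\pi$ of $\{0,\dots,M-1\}\times\{0,\dots,N-1\}$, $(i,j)\sim_\pi(i',j')$ means the pairs lie in the same block. $\pi\le\sigma$ means every block of $\pi$ is contained in a block of $\sigma$. $\pi$ is realizable with nonzero $r_0,\dots,r_{M-1},s_0,\dots,s_{N-1}\in K$ if for each block $E$, $\sum_{(i,j)\in E}r_is_j$ equals $1$ if $(0,0)\in E$ and $0$ otherwise. Let $\sim_r$ be the equivalence relation on $\{0,\dots,M-1\}$ generated by $i\sim_r i'$ whenever there exist $j,j'$ with $(i,j)\sim_\pi(i',j')$; $\pi$ is row connected if $\sim_r$ has a single class. Similarly $\sim_c$ on $\{0,\dots,N-1\}$ is generated by $j\sim_c j'$ whenever there exist $i,i'$ with $(i,j)\sim_\pi(i',j')$; $\pi$ is column connected if $\sim_c$ has a single class. *)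

theory Defs
  imports "HOL-Algebra.Group" "HOL-Library.Disjoint_Sets"
begin

text \<open>Group ring K[G] over a division ring K: finitely supported functions
  from the carrier of the group G to K (zero outside the carrier).\<close>

definition gr_elem :: "('a, 'm) monoid_scheme \<Rightarrow> ('a \<Rightarrow> 'k::zero) \<Rightarrow> bool" where
  "gr_elem G x \<longleftrightarrow> finite {g. x g \<noteq> 0} \<and> (\<forall>g. g \<notin> carrier G \<longrightarrow> x g = 0)"

definition gr_supp :: "('a \<Rightarrow> 'k::zero) \<Rightarrow> 'a set" where
  "gr_supp x = {g. x g \<noteq> 0}"

definition gr_rank :: "('a \<Rightarrow> 'k::zero) \<Rightarrow> nat" where
  "gr_rank x = card (gr_supp x)"

text \<open>(x y)(g) = sum over h k = g of x(h) y(k)\<close>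
definition gr_mult :: "('a, 'm) monoid_scheme \<Rightarrow> ('a \<Rightarrow> 'k::semiring_0) \<Rightarrow> ('a \<Rightarrow> 'k) \<Rightarrow> ('a \<Rightarrow> 'k)" where
  "gr_mult G x y = (\<lambda>g. if g \<in> carrier G
      then (\<Sum>h\<in>gr_supp x. x h * y (inv\<^bsub>G\<^esub> h \<otimes>\<^bsub>G\<^esub> g)) else 0)"

definition gr_one :: "('a, 'm) monoid_scheme \<Rightarrow> ('a \<Rightarrow> 'k::{zero,one})" where
  "gr_one G = (\<lambda>g. if g = \<one>\<^bsub>G\<^esub> then 1 else 0)"

definition gr_df :: "'k::division_ring itself \<Rightarrow> ('a, 'm) monoid_scheme \<Rightarrow> nat \<Rightarrow> nat \<Rightarrow> bool" where
  "gr_df _ G m n \<longleftrightarrow> (\<forall>x y :: 'a \<Rightarrow> 'k. gr_elem G x \<and> gr_elem G y \<and> gr_rank x = m \<and> gr_rank y = n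
      \<and> gr_mult G x y = gr_one G \<longrightarrow> gr_mult G y x = gr_one G)"

definition part_le :: "'a set set \<Rightarrow> 'a set set \<Rightarrow> bool" where
  "part_le \<pi> \<sigma> \<longleftrightarrow> (\<forall>E\<in>\<pi>. \<exists>F\<in>\<sigma>. E \<subseteq> F)"

definition realizable :: "(nat \<times> nat) set set \<Rightarrow> (nat \<Rightarrow> 'k::ring_1) \<Rightarrow> (nat \<Rightarrow> 'k) \<Rightarrow> bool" where
  "realizable \<pi> r s \<longleftrightarrow> (\<forall>E\<in>\<pi>. (\<Sum>(i,j)\<in>E. r i * s j) = (if (0,0) \<in> E then 1 else 0))"

definition row_rel :: "(nat \<times> nat) set set \<Rightarrow> (nat \<times> nat) set" where
  "row_rel \<pi> = {(i, i'). \<exists>j j'. \<exists>E\<in>\<pi>. (i, j) \<in> E \<and> (i', j') \<in> E}"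

definition col_rel :: "(nat \<times> nat) set set \<Rightarrow> (nat \<times> nat) set" where
  "col_rel \<pi> = {(j, j'). \<exists>i i'. \<exists>E\<in>\<pi>. (i, j) \<in> E \<and> (i', j') \<in> E}"

definition row_connected :: "nat \<Rightarrow> (nat \<times> nat) set set \<Rightarrow> bool" where
  "row_connected M \<pi> \<longleftrightarrow> (\<forall>i<M. \<forall>i'<M. (i, i') \<in> (row_rel \<pi> \<union> (row_rel \<pi>)\<inverse>)\<^sup>*)"

definition col_connected :: "nat \<Rightarrow> (nat \<times> nat) set set \<Rightarrow> bool" where
  "col_connected N \<pi> \<longleftrightarrow> (\<forall>j<N. \<forall>j'<N. (j, j') \<in> (col_rel \<pi> \<union> (col_rel \<pi>)\<inverse>)\<^sup>*)"

definition sigma_part :: "('a, 'm) monoid_scheme \<Rightarrow> nat \<Rightarrow> nat \<Rightarrow> (nat \<Rightarrow> 'a) \<Rightarrow> (nat \<Rightarrow> 'a) \<Rightarrow> (nat \<times> nat) set set" where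
  "sigma_part G M N cs ds = ({..<M} \<times> {..<N}) // {((i, j), (i', j')).
      (i, j) \<in> {..<M} \<times> {..<N} \<and> (i', j') \<in> {..<M} \<times> {..<N} \<and>
      cs i \<otimes>\<^bsub>G\<^esub> ds j = cs i' \<otimes>\<^bsub>G\<^esub> ds j'}"

end

theory Submission
  imports Defs "HOL-Library.Countable_Set" "HOL-Algebra.Generated_Groups"
begin

text \<open>If \<pi> is not row connected, the rows reachable from row 0 form a proper subset I, and
  I \<times> {0..N-1} is a union of blocks of \<pi>. Because \<pi> refines \<sigma> and is realizable, grouping the
  expansion of c' d by blocks shows that c' = \<Sum>(r_i c_i : i \<in> I) already satisfies c' d = 1.
  If |I| = 1 then c' = r_0, and r_0 d \<noteq> 1 because d has rank N \<ge> 2. Otherwise 2 \<le> |I| < M, the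
  hypothesis yields d c' = 1, and c = c (d c') = (c d) c' = c' contradicts rank c = M. Columns are
  symmetric, and \<sigma> itself is realizable because c d = 1.
  The hypotheses speak only about groups on \<nat>; they reach G because the subgroup generated by
  the supports of c and d is countable and can be transported to \<nat>.\<close>

definition gr_lincomb :: "'i set \<Rightarrow> ('i \<Rightarrow> 'a) \<Rightarrow> ('i \<Rightarrow> 'k) \<Rightarrow> ('a \<Rightarrow> 'k::comm_monoid_add)" where
  "gr_lincomb I a u = (\<lambda>g. \<Sum>i\<in>I. if a i = g then u i else 0)"

lemma gr_lincomb_apply: "finite I \<Longrightarrow> gr_lincomb I a u g = (\<Sum>i\<in>{i\<in>I. a i = g}. u i)"
  unfolding gr_lincomb_def by (simp add: sum.inter_filter)

lemma gr_lincomb_outside: "g \<notin> a ` I \<Longrightarrow> gr_lincomb I a u g = 0"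
  unfolding gr_lincomb_def by (intro sum.neutral) auto

lemma gr_lincomb_inj_apply:
  assumes "finite I" "inj_on a I" "i \<in> I"
  shows "gr_lincomb I a u (a i) = u i"
proof -
  have "(if a j = a i then u j else 0) = (if j = i then u j else 0)" if "j \<in> I" for j
    using assms(2,3) that by (auto dest: inj_onD)
  then have "gr_lincomb I a u (a i) = (\<Sum>j\<in>I. if j = i then u j else 0)"
    unfolding gr_lincomb_def by (rule sum.cong[OF refl])
  then show ?thesis using assms(1,3) by simp
qed

lemma gr_supp_lincomb_subset: "gr_supp (gr_lincomb I a u) \<subseteq> a ` I"
proof
  fix g assume "g \<in> gr_supp (gr_lincomb I a u)"
  then show "g \<in> a ` I" using gr_lincomb_outside[of g a I u] by (auto simp: gr_supp_def)
qed

lemma gr_supp_lincomb: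
  assumes "finite I" "inj_on a I" "\<forall>i\<in>I. u i \<noteq> 0"
  shows "gr_supp (gr_lincomb I a u) = a ` I"
proof
  show "a ` I \<subseteq> gr_supp (gr_lincomb I a u)"
    using gr_lincomb_inj_apply[OF assms(1,2), of _ u] assms(3) by (force simp: gr_supp_def)
qed (rule gr_supp_lincomb_subset)

lemma gr_rank_lincomb:
  assumes "finite I" "inj_on a I" "\<forall>i\<in>I. u i \<noteq> 0"
  shows "gr_rank (gr_lincomb I a u) = card I"
  unfolding gr_rank_def gr_supp_lincomb[OF assms] using card_image[OF assms(2)] .

lemma gr_elem_lincomb:
  assumes "finite I" "a ` I \<subseteq> carrier G"
  shows "gr_elem G (gr_lincomb I a u)"
proof -
  have "finite (gr_supp (gr_lincomb I a u))"
    using finite_surj[OF assms(1) gr_supp_lincomb_subset] .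
  moreover have "gr_lincomb I a u g = 0" if "g \<notin> carrier G" for g
    using that assms(2) by (intro gr_lincomb_outside) blast
  ultimately show ?thesis
    unfolding gr_elem_def gr_supp_def by blast
qed

lemma gr_lincomb_id: "finite S \<Longrightarrow> gr_supp z \<subseteq> S \<Longrightarrow> gr_lincomb S id z = z"
  unfolding gr_lincomb_def by (auto simp: fun_eq_iff gr_supp_def)

lemma gr_elem_finite_supp: "gr_elem G x \<Longrightarrow> finite (gr_supp x)"
  by (simp add: gr_elem_def gr_supp_def)

lemma gr_elem_supp_carrier: "gr_elem G x \<Longrightarrow> gr_supp x \<subseteq> carrier G"
  by (auto simp: gr_elem_def gr_supp_def)

lemma gr_lincomb_supp: "gr_elem G x \<Longrightarrow> gr_lincomb (gr_supp x) id x = x"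
  by (simp add: gr_lincomb_id gr_elem_finite_supp)

lemma gr_lincomb_cong:
  "(\<And>i. i \<in> I \<Longrightarrow> a i = a' i) \<Longrightarrow> (\<And>i. i \<in> I \<Longrightarrow> u i = u' i) \<Longrightarrow> gr_lincomb I a u = gr_lincomb I a' u'"
  unfolding gr_lincomb_def by (auto simp: fun_eq_iff intro!: sum.cong)

lemma gr_lincomb_reindex:
  assumes "bij_betw h A B"
  shows "gr_lincomb B a u = gr_lincomb A (a \<circ> h) (u \<circ> h)"
proof
  fix g
  show "gr_lincomb B a u g = gr_lincomb A (a \<circ> h) (u \<circ> h) g"
    using sum.reindex_bij_betw[OF assms, of "\<lambda>i. if a i = g then u i else 0"]
    by (simp add: gr_lincomb_def o_def)
qed

lemma gr_mult_lincomb: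
  fixes G (structure) and u :: "'i \<Rightarrow> 'k::semiring_0" and v :: "'j \<Rightarrow> 'k"
  assumes G: "group G" and fin: "finite I" "finite J"
    and carrier: "a ` I \<subseteq> carrier G" "b ` J \<subseteq> carrier G"
  shows "gr_mult G (gr_lincomb I a u) (gr_lincomb J b v)
       = gr_lincomb (I \<times> J) (\<lambda>(i,j). a i \<otimes>\<^bsub>G\<^esub> b j) (\<lambda>(i,j). u i * v j)"
    (is "gr_mult G ?x ?y = ?rhs")
proof
  fix g
  interpret group G by fact
  show "gr_mult G ?x ?y g = ?rhs g"
  proof (cases "g \<in> carrier G")
    case True
    let ?y' = "\<lambda>h. ?y (inv h \<otimes> g)"
    have "gr_mult G ?x ?y g = (\<Sum>h\<in>a ` I. ?x h * ?y' h)"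
      unfolding gr_mult_def using True gr_supp_lincomb_subset[of I a u] fin(1)
      by (simp, intro sum.mono_neutral_left) (auto simp: gr_supp_def)
    also have "\<dots> = (\<Sum>h\<in>a ` I. \<Sum>i\<in>{i\<in>I. a i = h}. u i * ?y' (a i))"
      by (rule sum.cong) (auto simp: gr_lincomb_apply[OF fin(1)] sum_distrib_right)
    also have "\<dots> = (\<Sum>i\<in>I. u i * ?y' (a i))"
      by (rule sum.image_gen[symmetric]) (rule fin)
    also have "\<dots> = (\<Sum>i\<in>I. \<Sum>j\<in>J. if a i \<otimes> b j = g then u i * v j else 0)"
    proof (rule sum.cong[OF refl])
      fix i assume "i \<in> I"
      then have "b j = inv (a i) \<otimes> g \<longleftrightarrow> a i \<otimes> b j = g" if "j \<in> J" for j
        using that carrier True inv_solve_left[of "b j" "a i" g] by auto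
      then show "u i * ?y' (a i) = (\<Sum>j\<in>J. if a i \<otimes> b j = g then u i * v j else 0)"
        unfolding gr_lincomb_def sum_distrib_left by (intro sum.cong) auto
    qed
    also have "\<dots> = ?rhs g"
      unfolding gr_lincomb_def sum.cartesian_product by (intro sum.cong) auto
    finally show ?thesis .
  next
    case False
    then have "g \<notin> (\<lambda>(i,j). a i \<otimes> b j) ` (I \<times> J)"
      using carrier by auto
    then show ?thesis
      using False by (simp add: gr_lincomb_outside gr_mult_def)
  qed
qed

lemma gr_mult_assoc:
  fixes G (structure) and x y z :: "'a \<Rightarrow> 'k::semiring_0"
  assumes G: "group G" and x: "gr_elem G x" and y: "gr_elem G y" and z: "gr_elem G z"
  shows "gr_mult G (gr_mult G x y) z = gr_mult G x (gr_mult G y z)"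
proof -
  interpret group G by fact
  let ?X = "gr_supp x" and ?Y = "gr_supp y" and ?Z = "gr_supp z"
  let ?m1 = "\<lambda>(p,k). (case p of (i,j) \<Rightarrow> i \<otimes> j) \<otimes> id k"
    and ?w1 = "\<lambda>(p,k). (case p of (i,j) \<Rightarrow> x i * y j) * z k"
    and ?m2 = "\<lambda>(i,q). id i \<otimes> (case q of (j,k) \<Rightarrow> j \<otimes> k)"
    and ?w2 = "\<lambda>(i,q). x i * (case q of (j,k) \<Rightarrow> y j * z k)"
  note fin = gr_elem_finite_supp[OF x] gr_elem_finite_supp[OF y] gr_elem_finite_supp[OF z]
  note carr = gr_elem_supp_carrier[OF x] gr_elem_supp_carrier[OF y] gr_elem_supp_carrier[OF z]
  note lincomb = gr_lincomb_supp[OF x] gr_lincomb_supp[OF y] gr_lincomb_supp[OF z]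
  have xy: "gr_mult G x y = gr_lincomb (?X \<times> ?Y) (\<lambda>(i,j). i \<otimes> j) (\<lambda>(i,j). x i * y j)"
    using gr_mult_lincomb[OF G fin(1,2), of id id x y] carr lincomb by simp
  have yz: "gr_mult G y z = gr_lincomb (?Y \<times> ?Z) (\<lambda>(j,k). j \<otimes> k) (\<lambda>(j,k). y j * z k)"
    using gr_mult_lincomb[OF G fin(2,3), of id id y z] carr lincomb by simp
  have "gr_mult G (gr_mult G x y) z
      = gr_mult G (gr_lincomb (?X \<times> ?Y) (\<lambda>(i,j). i \<otimes> j) (\<lambda>(i,j). x i * y j)) (gr_lincomb ?Z id z)"
    by (simp only: xy lincomb(3))
  also have "\<dots> = gr_lincomb ((?X \<times> ?Y) \<times> ?Z) ?m1 ?w1"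
    by (rule gr_mult_lincomb[OF G finite_cartesian_product[OF fin(1,2)] fin(3)]) (use carr in auto)
  also have "\<dots> = gr_lincomb (?X \<times> (?Y \<times> ?Z)) ?m2 ?w2"
  proof -
    let ?h = "\<lambda>((i,j),k). (i,(j,k))"
    have "bij_betw ?h ((?X \<times> ?Y) \<times> ?Z) (?X \<times> (?Y \<times> ?Z))"
      by (rule bij_betwI[where g="\<lambda>(i,(j,k)). ((i,j),k)"]) auto
    then have "gr_lincomb (?X \<times> (?Y \<times> ?Z)) ?m2 ?w2 = gr_lincomb ((?X \<times> ?Y) \<times> ?Z) (?m2 \<circ> ?h) (?w2 \<circ> ?h)"
      by (rule gr_lincomb_reindex)
    also have "\<dots> = gr_lincomb ((?X \<times> ?Y) \<times> ?Z) ?m1 ?w1"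
      by (rule gr_lincomb_cong) (auto simp: mult.assoc intro!: m_assoc[symmetric]
          dest: subsetD[OF carr(1)] subsetD[OF carr(2)] subsetD[OF carr(3)])
    finally show ?thesis by (rule sym)
  qed
  also have "\<dots> = gr_mult G (gr_lincomb ?X id x) (gr_lincomb (?Y \<times> ?Z) (\<lambda>(j,k). j \<otimes> k) (\<lambda>(j,k). y j * z k))"
    by (rule gr_mult_lincomb[OF G fin(1) finite_cartesian_product[OF fin(2,3)], symmetric]) (use carr in auto)
  also have "\<dots> = gr_mult G x (gr_mult G y z)"
    by (simp only: yz lincomb(1))
  finally show ?thesis .
qed

definition gr_const :: "('a, 'm) monoid_scheme \<Rightarrow> 'k \<Rightarrow> ('a \<Rightarrow> 'k::zero)" where
  "gr_const G a = (\<lambda>g. if g = \<one>\<^bsub>G\<^esub> then a else 0)"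

lemma gr_one_eq_const: "gr_one G = gr_const G 1"
  by (simp add: gr_one_def gr_const_def)

lemma gr_const_eq_lincomb: "gr_const G a = gr_lincomb {\<one>\<^bsub>G\<^esub>} id (\<lambda>_. a)"
  by (auto simp: gr_const_def gr_lincomb_def)

lemma gr_mult_const_left:
  fixes G (structure) and x :: "'a \<Rightarrow> 'k::semiring_0"
  assumes G: "group G" and x: "gr_elem G x"
  shows "gr_mult G (gr_const G a) x = (\<lambda>g. a * x g)"
proof -
  interpret group G by fact
  note fin = gr_elem_finite_supp[OF x] and carr = gr_elem_supp_carrier[OF x]
  have "gr_mult G (gr_const G a) x
      = gr_lincomb ({\<one>} \<times> gr_supp x) (\<lambda>(i,j). i \<otimes> j) (\<lambda>(i,j). a * x j)"
    unfolding gr_const_eq_lincomb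
    using gr_mult_lincomb[OF G _ fin, of "{\<one>}" id id "\<lambda>_. a" x] carr gr_lincomb_supp[OF x]
    by simp
  also have "\<dots> = gr_lincomb (gr_supp x) id (\<lambda>g. a * x g)"
    by (subst gr_lincomb_reindex[of "\<lambda>g. (\<one>, g)" "gr_supp x"])
      (auto intro!: gr_lincomb_cong bij_betwI[where g=snd] dest: subsetD[OF carr])
  also have "\<dots> = (\<lambda>g. a * x g)"
    using fin by (intro gr_lincomb_id) (auto simp: gr_supp_def)
  finally show ?thesis .
qed

lemma gr_mult_const_right:
  fixes G (structure) and x :: "'a \<Rightarrow> 'k::semiring_0"
  assumes G: "group G" and x: "gr_elem G x"
  shows "gr_mult G x (gr_const G a) = (\<lambda>g. x g * a)"
proof -
  interpret group G by fact
  note fin = gr_elem_finite_supp[OF x] and carr = gr_elem_supp_carrier[OF x]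
  have "gr_mult G x (gr_const G a)
      = gr_lincomb (gr_supp x \<times> {\<one>}) (\<lambda>(i,j). i \<otimes> j) (\<lambda>(i,j). x i * a)"
    unfolding gr_const_eq_lincomb
    using gr_mult_lincomb[OF G fin, of "{\<one>}" id id x "\<lambda>_. a"] carr gr_lincomb_supp[OF x]
    by simp
  also have "\<dots> = gr_lincomb (gr_supp x) id (\<lambda>g. x g * a)"
    by (subst gr_lincomb_reindex[of "\<lambda>g. (g, \<one>)" "gr_supp x"])
      (auto intro!: gr_lincomb_cong bij_betwI[where g=fst] dest: subsetD[OF carr])
  also have "\<dots> = (\<lambda>g. x g * a)"
    using fin by (intro gr_lincomb_id) (auto simp: gr_supp_def)
  finally show ?thesis .
qed

lemma gr_inverse_unique:
  fixes x y z :: "'a \<Rightarrow> 'k::semiring_1"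
  assumes G: "group G" and elems: "gr_elem G x" "gr_elem G y" "gr_elem G z"
    and xy: "gr_mult G x y = gr_one G" and yz: "gr_mult G y z = gr_one G"
  shows "x = z"
proof -
  have "x = gr_mult G x (gr_mult G y z)"
    unfolding yz gr_one_eq_const gr_mult_const_right[OF G elems(1)] by simp
  also have "\<dots> = gr_mult G (gr_mult G x y) z"
    using gr_mult_assoc[OF G elems] by simp
  also have "\<dots> = z"
    unfolding xy gr_one_eq_const gr_mult_const_left[OF G elems(3)] by simp
  finally show ?thesis .
qed
lemma (in group) foldr_mult_closed: "set l \<subseteq> carrier G \<Longrightarrow> foldr (\<otimes>) l \<one> \<in> carrier G"
  by (induction l) auto

lemma (in group) foldr_mult_append:
  "set l1 \<subseteq> carrier G \<Longrightarrow> set l2 \<subseteq> carrier G \<Longrightarrow>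
   foldr (\<otimes>) (l1 @ l2) \<one> = foldr (\<otimes>) l1 \<one> \<otimes> foldr (\<otimes>) l2 \<one>"
  by (induction l1) (auto simp: m_assoc foldr_mult_closed)

lemma (in group) countable_generate:
  assumes fin: "finite S" and sub: "S \<subseteq> carrier G"
  shows "countable (generate G S)"
proof -
  let ?T = "S \<union> m_inv G ` S" and ?prod = "\<lambda>l. foldr (\<otimes>) l \<one>"
  have T: "?T \<subseteq> carrier G" using sub by auto
  have "h \<in> ?prod ` lists ?T" if "h \<in> generate G S" for h
    using that
  proof (induction rule: generate.induct)
    case one
    show ?case by (auto intro!: image_eqI[where x="[]"])
  next
    case (incl h)
    then show ?case using sub by (auto intro!: image_eqI[where x="[h]"])
  next
    case (inv h)
    then show ?case using sub by (auto intro!: image_eqI[where x="[inv h]"])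
  next
    case (eng h1 h2)
    then obtain l1 l2 where l: "l1 \<in> lists ?T" "l2 \<in> lists ?T" "h1 = ?prod l1" "h2 = ?prod l2"
      by auto
    moreover have "set l1 \<subseteq> carrier G" "set l2 \<subseteq> carrier G"
      using l(1,2) T by auto
    ultimately have "h1 \<otimes> h2 = ?prod (l1 @ l2)"
      by (simp only: foldr_mult_append)
    then show ?case using l(1,2) by (auto intro!: image_eqI[where x="l1 @ l2"])
  qed
  then have "generate G S \<subseteq> ?prod ` lists ?T" by blast
  moreover have "countable (?prod ` lists ?T)"
    using fin by (intro countable_image countable_lists countable_finite) auto
  ultimately show ?thesis by (rule countable_subset)
qed

definition transport_group :: "('a, 'm) monoid_scheme \<Rightarrow> 'a set \<Rightarrow> ('a \<Rightarrow> 'b) \<Rightarrow> 'b monoid" where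
  "transport_group G H f = \<lparr>carrier = f ` H,
     mult = (\<lambda>x y. f (the_inv_into H f x \<otimes>\<^bsub>G\<^esub> the_inv_into H f y)), one = f \<one>\<^bsub>G\<^esub>\<rparr>"

lemma transport_group_mult:
  "inj_on f H \<Longrightarrow> h \<in> H \<Longrightarrow> k \<in> H \<Longrightarrow> f h \<otimes>\<^bsub>transport_group G H f\<^esub> f k = f (h \<otimes>\<^bsub>G\<^esub> k)"
  by (simp add: transport_group_def the_inv_into_f_f)

lemma (in group) group_transport_group:
  assumes H: "subgroup H G" and f: "inj_on f H"
  shows "group (transport_group G H f)"
proof -
  let ?G' = "transport_group G H f"
  note mult = transport_group_mult[OF f]
  have carrier: "carrier ?G' = f ` H" and one: "\<one>\<^bsub>?G'\<^esub> = f \<one>"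
    by (simp_all add: transport_group_def)
  have HG: "h \<in> carrier G" if "h \<in> H" for h
    using that subgroup.subset[OF H] by blast
  note closed = subgroup.m_closed[OF H] subgroup.one_closed[OF H] subgroup.m_inv_closed[OF H]
  show ?thesis
  proof (rule groupI)
    show "a \<otimes>\<^bsub>?G'\<^esub> b \<in> carrier ?G'" if "a \<in> carrier ?G'" "b \<in> carrier ?G'" for a b
      using that closed by (auto simp: carrier mult)
    show "\<one>\<^bsub>?G'\<^esub> \<in> carrier ?G'"
      using closed by (simp add: carrier one)
    show "a \<otimes>\<^bsub>?G'\<^esub> b \<otimes>\<^bsub>?G'\<^esub> c = a \<otimes>\<^bsub>?G'\<^esub> (b \<otimes>\<^bsub>?G'\<^esub> c)"
      if "a \<in> carrier ?G'" "b \<in> carrier ?G'" "c \<in> carrier ?G'" for a b c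
      using that closed by (auto simp: carrier mult m_assoc HG)
    show "\<one>\<^bsub>?G'\<^esub> \<otimes>\<^bsub>?G'\<^esub> a = a" if "a \<in> carrier ?G'" for a
      using that closed by (auto simp: carrier mult one HG)
    show "\<exists>b\<in>carrier ?G'. b \<otimes>\<^bsub>?G'\<^esub> a = \<one>\<^bsub>?G'\<^esub>" if a: "a \<in> carrier ?G'" for a
    proof -
      obtain h where h: "h \<in> H" "a = f h" using a by (auto simp: carrier)
      then have "f (inv h) \<otimes>\<^bsub>?G'\<^esub> a = \<one>\<^bsub>?G'\<^esub>"
        using closed by (simp add: mult one HG)
      then show ?thesis using h closed by (auto simp: carrier)
    qed
  qed
qed

lemma gr_lincomb_comp_eq_one_iff:
  assumes f: "inj_on f H" and m: "m ` P \<subseteq> H" and H: "\<one>\<^bsub>G\<^esub> \<in> H"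
    and one: "\<one>\<^bsub>G'\<^esub> = f \<one>\<^bsub>G\<^esub>"
  shows "gr_lincomb P (\<lambda>p. f (m p)) w = gr_one G' \<longleftrightarrow> gr_lincomb P m w = gr_one G"
proof -
  have comp: "gr_lincomb P (\<lambda>p. f (m p)) w (f h) = gr_lincomb P m w h" if "h \<in> H" for h
    unfolding gr_lincomb_def using f m that by (intro sum.cong) (auto dest: inj_onD)
  have one_f: "gr_one G' (f h) = gr_one G h" if "h \<in> H" for h
    using f H that one by (auto simp: gr_one_def dest: inj_onD)
  show ?thesis
  proof
    assume eq: "gr_lincomb P (\<lambda>p. f (m p)) w = gr_one G'"
    show "gr_lincomb P m w = gr_one G"
    proof
      fix g
      show "gr_lincomb P m w g = gr_one G g"
      proof (cases "g \<in> H")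
        case True
        then show ?thesis using comp one_f eq by metis
      next
        case False
        then show ?thesis using m H by (auto simp: gr_one_def intro!: gr_lincomb_outside)
      qed
    qed
  next
    assume eq: "gr_lincomb P m w = gr_one G"
    show "gr_lincomb P (\<lambda>p. f (m p)) w = gr_one G'"
    proof
      fix n
      show "gr_lincomb P (\<lambda>p. f (m p)) w n = gr_one G' n"
      proof (cases "n \<in> f ` H")
        case True
        then obtain h where "h \<in> H" "n = f h" by blast
        then show ?thesis using comp one_f eq by metis
      next
        case False
        then show ?thesis using m H one by (auto simp: gr_one_def intro!: gr_lincomb_outside)
      qed
    qed
  qed
qed

lemma (in group) transport_mult_eq_one_iff:
  fixes u v :: "'a \<Rightarrow> 'k::semiring_1"
  assumes H: "subgroup H G" and f: "inj_on f H"
    and fin: "finite A" "finite B" and AB: "A \<subseteq> H" "B \<subseteq> H"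
  shows "gr_mult (transport_group G H f) (gr_lincomb A f u) (gr_lincomb B f v) = gr_one (transport_group G H f)
     \<longleftrightarrow> gr_mult G (gr_lincomb A id u) (gr_lincomb B id v) = gr_one G"
proof -
  let ?G' = "transport_group G H f" and ?m = "\<lambda>(i,j). i \<otimes> j" and ?w = "\<lambda>(i,j). u i * v j"
  have HG: "H \<subseteq> carrier G" by (rule subgroup.subset[OF H])
  have "gr_mult ?G' (gr_lincomb A f u) (gr_lincomb B f v)
      = gr_lincomb (A \<times> B) (\<lambda>(i,j). f i \<otimes>\<^bsub>?G'\<^esub> f j) ?w"
    using AB by (intro gr_mult_lincomb group_transport_group H f fin) (auto simp: transport_group_def)
  also have "\<dots> = gr_lincomb (A \<times> B) (\<lambda>p. f (?m p)) ?w"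
    using AB by (intro gr_lincomb_cong) (auto intro: transport_group_mult[OF f])
  finally have G': "gr_mult ?G' (gr_lincomb A f u) (gr_lincomb B f v) = gr_lincomb (A \<times> B) (\<lambda>p. f (?m p)) ?w" .
  have G: "gr_mult G (gr_lincomb A id u) (gr_lincomb B id v) = gr_lincomb (A \<times> B) ?m ?w"
    using AB HG gr_mult_lincomb[OF is_group fin, of id id u v] by auto
  have "?m ` (A \<times> B) \<subseteq> H"
    using AB subgroup.m_closed[OF H] by auto
  then show ?thesis
    unfolding G G' using subgroup.one_closed[OF H]
    by (intro gr_lincomb_comp_eq_one_iff[OF f]) (auto simp: transport_group_def)
qed

lemma gr_df_transfer:
  fixes G :: "'a monoid" (structure) and x y :: "'a \<Rightarrow> 'k::division_ring"
  assumes G: "group G" and x: "gr_elem G x" and y: "gr_elem G y"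
    and xy: "gr_mult G x y = gr_one G"
    and df: "\<forall>G' :: nat monoid. group G' \<longrightarrow> gr_df TYPE('k) G' (gr_rank x) (gr_rank y)"
  shows "gr_mult G y x = gr_one G"
proof -
  interpret group G by fact
  let ?X = "gr_supp x" and ?Y = "gr_supp y"
  note fin = gr_elem_finite_supp[OF x] gr_elem_finite_supp[OF y]
  note carr = gr_elem_supp_carrier[OF x] gr_elem_supp_carrier[OF y]
  define H where "H = generate G (?X \<union> ?Y)"
  have H: "subgroup H G"
    unfolding H_def using carr by (intro generate_is_subgroup) auto
  have XY: "?X \<subseteq> H" "?Y \<subseteq> H"
    unfolding H_def by (auto intro: generate.incl)
  have "countable H"
    unfolding H_def using fin carr by (intro countable_generate) auto
  then obtain f :: "'a \<Rightarrow> nat" where f: "inj_on f H"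
    by (auto simp: countable_def)
  let ?G' = "transport_group G H f"
  let ?x = "gr_lincomb ?X f x" and ?y = "gr_lincomb ?Y f y"
  note iff = transport_mult_eq_one_iff[OF H f]
  have "gr_elem ?G' ?x" "gr_elem ?G' ?y"
    using XY fin by (auto intro!: gr_elem_lincomb simp: transport_group_def)
  moreover have "gr_rank ?x = gr_rank x" "gr_rank ?y = gr_rank y"
    using gr_rank_lincomb[OF fin(1) inj_on_subset[OF f XY(1)], of x]
      gr_rank_lincomb[OF fin(2) inj_on_subset[OF f XY(2)], of y]
    by (simp_all add: gr_rank_def gr_supp_def)
  moreover have "gr_mult ?G' ?x ?y = gr_one ?G'"
    using iff[OF fin XY, of x y] xy gr_lincomb_supp[OF x] gr_lincomb_supp[OF y] by simp
  ultimately have "gr_mult ?G' ?y ?x = gr_one ?G'"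
    using df group_transport_group[OF H f] unfolding gr_df_def by blast
  then show ?thesis
    using iff[OF fin(2,1) XY(2,1), of y x] gr_lincomb_supp[OF x] gr_lincomb_supp[OF y] by simp
qed

lemma sum_union_of_blocks:
  fixes w :: "'p \<Rightarrow> 'k::{comm_monoid_add,one}"
  assumes part: "partition_on U \<pi>" and fin: "finite U" and S: "S \<subseteq> U"
    and closed: "\<forall>E\<in>\<pi>. \<forall>p\<in>E. \<forall>q\<in>E. p \<in> S \<longrightarrow> q \<in> S"
    and blocks: "\<forall>E\<in>\<pi>. sum w E = (if z \<in> E then 1 else 0)"
  shows "sum w S = (if z \<in> S then 1 else 0)"
proof -
  let ?C = "{E\<in>\<pi>. E \<subseteq> S}"
  have U: "U = \<Union>\<pi>" and disj: "disjoint \<pi>"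
    using part by (auto dest: partition_onD1 partition_onD2)
  have "S \<subseteq> \<Union>?C"
  proof
    fix p assume "p \<in> S"
    then obtain E where E: "E \<in> \<pi>" "p \<in> E"
      using S unfolding U by blast
    then have "E \<subseteq> S"
      using closed \<open>p \<in> S\<close> by blast
    then show "p \<in> \<Union>?C" using E by blast
  qed
  then have S_eq: "\<Union>?C = S" by blast
  have "\<forall>E\<in>?C. finite E"
    using fin unfolding U by (auto intro: finite_subset)
  moreover have "\<forall>A\<in>?C. \<forall>B\<in>?C. A \<noteq> B \<longrightarrow> A \<inter> B = {}"
    using disj by (auto dest: disjointD)
  ultimately have "sum w (\<Union>?C) = (\<Sum>E\<in>?C. sum w E)"
    by (subst sum.Union_disjoint) simp_all
  then have "sum w S = (\<Sum>E\<in>?C. sum w E)"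
    by (simp only: S_eq)
  also have "\<dots> = (\<Sum>E\<in>?C. if z \<in> E then 1 else 0)"
    by (rule sum.cong[OF refl]) (use blocks in simp)
  also have "\<dots> = (if z \<in> S then 1 else 0)"
  proof (cases "z \<in> S")
    case True
    then obtain E0 where E0: "E0 \<in> ?C" "z \<in> E0"
      using \<open>S \<subseteq> \<Union>?C\<close> by blast
    have unique: "z \<in> E \<longleftrightarrow> E = E0" if "E \<in> ?C" for E
      using that E0 disjointD[OF disj] by blast
    have "(\<Sum>E\<in>?C. if z \<in> E then (1::'k) else 0) = (\<Sum>E\<in>?C. if E = E0 then 1 else 0)"
      by (rule sum.cong[OF refl]) (simp add: unique)
    also have "\<dots> = 1"
      using finite_elements[OF fin part] E0(1) by simp
    finally show ?thesis using True by simp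
  next
    case False
    then have "z \<notin> E" if "E \<in> ?C" for E
      using that by blast
    then show ?thesis using False by (subst sum.neutral) auto
  qed
  finally show ?thesis .
qed

lemma proper_closed_class:
  assumes blocks_rel: "\<forall>E\<in>\<pi>. \<forall>p\<in>E. \<forall>q\<in>E. (f p, f q) \<in> R"
    and blocks_V: "\<forall>E\<in>\<pi>. f ` E \<subseteq> V" and x0: "x0 \<in> V"
    and not_conn: "\<not> (\<forall>x\<in>V. \<forall>y\<in>V. (x, y) \<in> (R \<union> R\<inverse>)\<^sup>*)"
  obtains X where "x0 \<in> X" "X \<subset> V" "\<forall>E\<in>\<pi>. \<forall>p\<in>E. \<forall>q\<in>E. f p \<in> X \<longrightarrow> f q \<in> X"
proof
  let ?R = "(R \<union> R\<inverse>)\<^sup>*"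
  define X where "X = {x\<in>V. (x0, x) \<in> ?R}"
  show "x0 \<in> X" using x0 by (simp add: X_def)
  show "\<forall>E\<in>\<pi>. \<forall>p\<in>E. \<forall>q\<in>E. f p \<in> X \<longrightarrow> f q \<in> X"
  proof (intro ballI impI)
    fix E p q assume "E \<in> \<pi>" "p \<in> E" "q \<in> E" "f p \<in> X"
    then have "(x0, f p) \<in> ?R" "(f p, f q) \<in> R \<union> R\<inverse>" "f q \<in> V"
      using blocks_rel blocks_V unfolding X_def by blast+
    then show "f q \<in> X"
      unfolding X_def by (auto intro: rtrancl_into_rtrancl)
  qed
  have sym: "sym ?R" by (intro sym_rtrancl sym_Un_converse)
  obtain x y where "x \<in> V" "y \<in> V" "(x, y) \<notin> ?R"
    using not_conn by blast
  then have "x \<notin> X \<or> y \<notin> X"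
    unfolding X_def using sym rtrancl_trans[of x x0 ?R y] by (auto dest: symD)
  then show "X \<subset> V"
    using \<open>x \<in> V\<close> \<open>y \<in> V\<close> unfolding X_def by blast
qed

locale unit_pair = group G for G :: "'a monoid" (structure) +
  fixes M N :: nat and cs ds :: "nat \<Rightarrow> 'a" and r s :: "nat \<Rightarrow> 'k::division_ring"
  assumes M: "2 \<le> M" and N: "2 \<le> N"
    and cs_carrier: "\<forall>i<M. cs i \<in> carrier G" and ds_carrier: "\<forall>j<N. ds j \<in> carrier G"
    and cs_inj: "inj_on cs {..<M}" and ds_inj: "inj_on ds {..<N}"
    and r_nonzero: "\<forall>i<M. r i \<noteq> 0" and s_nonzero: "\<forall>j<N. s j \<noteq> 0"
    and cs_0: "cs 0 = \<one>" and ds_0: "ds 0 = \<one>"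
    and unit: "gr_mult G (gr_lincomb {..<M} cs r) (gr_lincomb {..<N} ds s) = gr_one G"
begin

abbreviation c where "c \<equiv> gr_lincomb {..<M} cs r"
abbreviation d where "d \<equiv> gr_lincomb {..<N} ds s"
abbreviation \<sigma> where "\<sigma> \<equiv> sigma_part G M N cs ds"

lemma cs_image: "cs ` {..<M} \<subseteq> carrier G"
  using cs_carrier by auto

lemma ds_image: "ds ` {..<N} \<subseteq> carrier G"
  using ds_carrier by auto

lemma gr_elem_lincomb_rows: "I \<subseteq> {..<M} \<Longrightarrow> gr_elem G (gr_lincomb I cs r)"
  using cs_carrier by (intro gr_elem_lincomb) (auto intro: finite_subset)

lemma gr_elem_lincomb_cols: "J \<subseteq> {..<N} \<Longrightarrow> gr_elem G (gr_lincomb J ds s)"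
  using ds_carrier by (intro gr_elem_lincomb) (auto intro: finite_subset)

lemma gr_rank_lincomb_rows: "I \<subseteq> {..<M} \<Longrightarrow> gr_rank (gr_lincomb I cs r) = card I"
  using r_nonzero by (intro gr_rank_lincomb inj_on_subset[OF cs_inj]) (auto intro: finite_subset)

lemma gr_rank_lincomb_cols: "J \<subseteq> {..<N} \<Longrightarrow> gr_rank (gr_lincomb J ds s) = card J"
  using s_nonzero by (intro gr_rank_lincomb inj_on_subset[OF ds_inj]) (auto intro: finite_subset)

lemma sigma_eq_quotient:
  "\<sigma> = ({..<M} \<times> {..<N}) // {(p, q). p \<in> {..<M} \<times> {..<N} \<and> q \<in> {..<M} \<times> {..<N}
      \<and> (\<lambda>(i,j). cs i \<otimes> ds j) p = (\<lambda>(i,j). cs i \<otimes> ds j) q}"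
  unfolding sigma_part_def by (rule arg_cong[where f="(//) _"]) auto

lemma sigma_block_eq:
  assumes "F \<in> \<sigma>" "p \<in> F" "q \<in> F"
  shows "(\<lambda>(i,j). cs i \<otimes> ds j) p = (\<lambda>(i,j). cs i \<otimes> ds j) q"
  using assms unfolding sigma_eq_quotient quotient_def by auto

lemma partition_sigma: "partition_on ({..<M} \<times> {..<N}) \<sigma>"
  unfolding sigma_eq_quotient
  by (intro partition_on_quotient equivI) (auto simp: refl_on_def sym_def trans_def)

lemma realizable_sigma: "realizable \<sigma> r s"
  unfolding realizable_def
proof
  let ?U = "{..<M} \<times> {..<N}" and ?m = "\<lambda>(i,j). cs i \<otimes> ds j" and ?w = "\<lambda>(i,j). r i * s j"
  fix F assume "F \<in> \<sigma>"
  then obtain q where "F = {p \<in> ?U. ?m q = ?m p}"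
    unfolding sigma_eq_quotient by (rule quotientE) auto
  then have F: "F = {p \<in> ?U. ?m p = ?m q}" by auto
  have "gr_lincomb ?U ?m ?w = gr_one G"
    using unit gr_mult_lincomb[OF is_group finite_lessThan finite_lessThan cs_image ds_image, of r s]
    by simp
  moreover have "sum ?w F = gr_lincomb ?U ?m ?w (?m q)"
    unfolding F by (simp add: gr_lincomb_apply)
  ultimately have "sum ?w F = gr_one G (?m q)"
    by simp
  also have "\<dots> = (if (0,0) \<in> F then 1 else 0)"
  proof -
    have "(0,0) \<in> F \<longleftrightarrow> ?m q = \<one>"
      using M N cs_0 ds_0 unfolding F by auto
    then show ?thesis by (simp add: gr_one_def)
  qed
  finally show "(\<Sum>(i,j)\<in>F. r i * s j) = (if (0,0) \<in> F then 1 else 0)" .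
qed

text \<open>Since \<pi> refines \<sigma>, the products \<open>cs i \<otimes> ds j\<close> are constant on each block of \<pi>,
  so every coefficient of the partial product is a sum of whole blocks.\<close>

lemma lincomb_rectangle_unit:
  assumes \<pi>: "partition_on ({..<M} \<times> {..<N}) \<pi>" "part_le \<pi> \<sigma>" "realizable \<pi> r s"
    and IJ: "I \<subseteq> {..<M}" "J \<subseteq> {..<N}" "0 \<in> I" "0 \<in> J"
    and closed: "\<forall>E\<in>\<pi>. \<forall>p\<in>E. \<forall>q\<in>E. p \<in> I \<times> J \<longrightarrow> q \<in> I \<times> J"
  shows "gr_mult G (gr_lincomb I cs r) (gr_lincomb J ds s) = gr_one G"
proof
  let ?m = "\<lambda>(i,j). cs i \<otimes> ds j" and ?w = "\<lambda>(i,j). r i * s j"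
  fix g
  have fin: "finite I" "finite J"
    using IJ by (auto intro: finite_subset)
  have "gr_mult G (gr_lincomb I cs r) (gr_lincomb J ds s) g = gr_lincomb (I \<times> J) ?m ?w g"
    using IJ cs_carrier ds_carrier by (subst gr_mult_lincomb[OF is_group fin]) auto
  also have "\<dots> = sum ?w {p \<in> I \<times> J. ?m p = g}"
    using fin by (simp add: gr_lincomb_apply)
  also have "\<dots> = (if (0,0) \<in> {p \<in> I \<times> J. ?m p = g} then 1 else 0)"
  proof (rule sum_union_of_blocks[OF \<pi>(1)])
    show "\<forall>E\<in>\<pi>. \<forall>p\<in>E. \<forall>q\<in>E. p \<in> {p \<in> I \<times> J. ?m p = g} \<longrightarrow> q \<in> {p \<in> I \<times> J. ?m p = g}"
    proof (intro ballI impI)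
      fix E p q assume E: "E \<in> \<pi>" "p \<in> E" "q \<in> E" and p: "p \<in> {p \<in> I \<times> J. ?m p = g}"
      obtain F where "F \<in> \<sigma>" "E \<subseteq> F"
        using \<pi>(2) E(1) unfolding part_le_def by blast
      then have "?m q = ?m p"
        using E sigma_block_eq by blast
      moreover have "q \<in> I \<times> J"
        using closed E p by blast
      ultimately show "q \<in> {p \<in> I \<times> J. ?m p = g}"
        using p by simp
    qed
    show "\<forall>E\<in>\<pi>. sum ?w E = (if (0,0) \<in> E then 1 else 0)"
      using \<pi>(3) by (simp add: realizable_def)
  qed (use IJ in auto)
  also have "\<dots> = gr_one G g"
    using IJ cs_0 ds_0 by (auto simp: gr_one_def)
  finally show "gr_mult G (gr_lincomb I cs r) (gr_lincomb J ds s) g = gr_one G g" .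
qed

lemma row_connected_if_realizable:
  assumes df: "\<forall>m. 2 \<le> m \<and> m < M \<longrightarrow> (\<forall>G' :: nat monoid. group G' \<longrightarrow> gr_df TYPE('k) G' m N)"
    and \<pi>: "partition_on ({..<M} \<times> {..<N}) \<pi>" "part_le \<pi> \<sigma>" "realizable \<pi> r s"
  shows "row_connected M \<pi>"
proof (rule ccontr)
  have blocks: "\<forall>E\<in>\<pi>. E \<subseteq> {..<M} \<times> {..<N}"
    using \<pi>(1) by (auto simp: partition_on_def)
  assume "\<not> row_connected M \<pi>"
  then have not_conn: "\<not> (\<forall>x\<in>{..<M}. \<forall>y\<in>{..<M}. (x, y) \<in> (row_rel \<pi> \<union> (row_rel \<pi>)\<inverse>)\<^sup>*)"
    by (auto simp: row_connected_def)
  have rel: "\<forall>E\<in>\<pi>. \<forall>p\<in>E. \<forall>q\<in>E. (fst p, fst q) \<in> row_rel \<pi>"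
    by (force simp: row_rel_def)
  have rows: "\<forall>E\<in>\<pi>. fst ` E \<subseteq> {..<M}" and cols: "\<forall>E\<in>\<pi>. snd ` E \<subseteq> {..<N}"
    using blocks by (fastforce simp: subset_iff)+
  have "0 \<in> {..<M}" using M by simp
  then obtain I where I: "0 \<in> I" "I \<subset> {..<M}"
    and closed: "\<forall>E\<in>\<pi>. \<forall>p\<in>E. \<forall>q\<in>E. fst p \<in> I \<longrightarrow> fst q \<in> I"
    by (rule proper_closed_class[OF rel rows _ not_conn])
  let ?c' = "gr_lincomb I cs r"
  have "\<forall>E\<in>\<pi>. \<forall>p\<in>E. \<forall>q\<in>E. p \<in> I \<times> {..<N} \<longrightarrow> q \<in> I \<times> {..<N}"
  proof (intro ballI impI)
    fix E p q assume E: "E \<in> \<pi>" "p \<in> E" "q \<in> E" and "p \<in> I \<times> {..<N}"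
    then have "fst p \<in> I" by auto
    then have "fst q \<in> I"
      using closed E by blast
    moreover have "snd q \<in> {..<N}"
      using cols E by blast
    ultimately show "q \<in> I \<times> {..<N}" by (simp add: mem_Times_iff)
  qed
  then have c'd: "gr_mult G ?c' d = gr_one G"
    using \<pi> I N by (intro lincomb_rectangle_unit) simp_all
  show False
  proof (cases "card I = 1")
    case True
    then have "I = {0}"
      using I(1) by (metis card_1_singletonE singletonD)
    then have "?c' = gr_const G (r 0)"
      by (auto simp: gr_lincomb_def gr_const_def cs_0 fun_eq_iff)
    then have "(\<lambda>g. r 0 * d g) = gr_one G"
      using c'd gr_mult_const_left[OF is_group gr_elem_lincomb_cols[of "{..<N}"]] by simp
    moreover have "d (ds 1) = s 1" and "ds 1 \<noteq> \<one>"
      using N ds_inj ds_0 gr_lincomb_inj_apply[OF _ ds_inj, of 1 s]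
      by (auto dest: inj_onD[of ds _ 1 0])
    ultimately have "r 0 * s 1 = 0"
      by (metis gr_one_def)
    then show False
      using r_nonzero s_nonzero M N by simp
  next
    case False
    have "card I < M"
      using psubset_card_mono[OF _ I(2)] by simp
    moreover have "card I \<noteq> 0"
      using I by (auto simp: finite_subset)
    ultimately have "\<forall>G' :: nat monoid. group G' \<longrightarrow> gr_df TYPE('k) G' (gr_rank ?c') (gr_rank d)"
      using df False I(2) by (simp add: gr_rank_lincomb_rows gr_rank_lincomb_cols)
    then have "gr_mult G d ?c' = gr_one G"
      using I(2) by (intro gr_df_transfer[OF is_group _ _ c'd] gr_elem_lincomb_rows gr_elem_lincomb_cols) auto
    then have "c = ?c'"
      using I(2) unit
      by (intro gr_inverse_unique[OF is_group _ _ _ unit]) (auto intro: gr_elem_lincomb_rows gr_elem_lincomb_cols)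
    then have "M = card I"
      using I(2) gr_rank_lincomb_rows[of "{..<M}"] gr_rank_lincomb_rows[of I] by simp
    then show False
      using \<open>card I < M\<close> by simp
  qed
qed

lemma col_connected_if_realizable:
  assumes df: "\<forall>n. 2 \<le> n \<and> n < N \<longrightarrow> (\<forall>G' :: nat monoid. group G' \<longrightarrow> gr_df TYPE('k) G' M n)"
    and \<pi>: "partition_on ({..<M} \<times> {..<N}) \<pi>" "part_le \<pi> \<sigma>" "realizable \<pi> r s"
  shows "col_connected N \<pi>"
proof (rule ccontr)
  have blocks: "\<forall>E\<in>\<pi>. E \<subseteq> {..<M} \<times> {..<N}"
    using \<pi>(1) by (auto simp: partition_on_def)
  assume "\<not> col_connected N \<pi>"
  then have not_conn: "\<not> (\<forall>x\<in>{..<N}. \<forall>y\<in>{..<N}. (x, y) \<in> (col_rel \<pi> \<union> (col_rel \<pi>)\<inverse>)\<^sup>*)"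
    by (auto simp: col_connected_def)
  have rel: "\<forall>E\<in>\<pi>. \<forall>p\<in>E. \<forall>q\<in>E. (snd p, snd q) \<in> col_rel \<pi>"
    by (force simp: col_rel_def)
  have rows: "\<forall>E\<in>\<pi>. fst ` E \<subseteq> {..<M}" and cols: "\<forall>E\<in>\<pi>. snd ` E \<subseteq> {..<N}"
    using blocks by (fastforce simp: subset_iff)+
  have "0 \<in> {..<N}" using N by simp
  then obtain J where J: "0 \<in> J" "J \<subset> {..<N}"
    and closed: "\<forall>E\<in>\<pi>. \<forall>p\<in>E. \<forall>q\<in>E. snd p \<in> J \<longrightarrow> snd q \<in> J"
    by (rule proper_closed_class[OF rel cols _ not_conn])
  let ?d' = "gr_lincomb J ds s"
  have "\<forall>E\<in>\<pi>. \<forall>p\<in>E. \<forall>q\<in>E. p \<in> {..<M} \<times> J \<longrightarrow> q \<in> {..<M} \<times> J"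
  proof (intro ballI impI)
    fix E p q assume E: "E \<in> \<pi>" "p \<in> E" "q \<in> E" and "p \<in> {..<M} \<times> J"
    then have "snd p \<in> J" by auto
    then have "snd q \<in> J"
      using closed E by blast
    moreover have "fst q \<in> {..<M}"
      using rows E by blast
    ultimately show "q \<in> {..<M} \<times> J" by (simp add: mem_Times_iff)
  qed
  then have cd': "gr_mult G c ?d' = gr_one G"
    using \<pi> J M by (intro lincomb_rectangle_unit) simp_all
  show False
  proof (cases "card J = 1")
    case True
    then have "J = {0}"
      using J(1) by (metis card_1_singletonE singletonD)
    then have "?d' = gr_const G (s 0)"
      by (auto simp: gr_lincomb_def gr_const_def ds_0 fun_eq_iff)
    then have "(\<lambda>g. c g * s 0) = gr_one G"
      using cd' gr_mult_const_right[OF is_group gr_elem_lincomb_rows[of "{..<M}"]] by simp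
    moreover have "c (cs 1) = r 1" and "cs 1 \<noteq> \<one>"
      using M cs_inj cs_0 gr_lincomb_inj_apply[OF _ cs_inj, of 1 r]
      by (auto dest: inj_onD[of cs _ 1 0])
    ultimately have "r 1 * s 0 = 0"
      by (metis gr_one_def)
    then show False
      using r_nonzero s_nonzero M N by simp
  next
    case False
    have "card J < N"
      using psubset_card_mono[OF _ J(2)] by simp
    moreover have "card J \<noteq> 0"
      using J by (auto simp: finite_subset)
    ultimately have "\<forall>G' :: nat monoid. group G' \<longrightarrow> gr_df TYPE('k) G' (gr_rank c) (gr_rank ?d')"
      using df False J(2) by (simp add: gr_rank_lincomb_rows gr_rank_lincomb_cols)
    then have "gr_mult G ?d' c = gr_one G"
      using J(2) by (intro gr_df_transfer[OF is_group _ _ cd'] gr_elem_lincomb_rows gr_elem_lincomb_cols) auto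
    then have "?d' = d"
      using J(2)
      by (intro gr_inverse_unique[OF is_group _ _ _ _ unit]) (auto intro: gr_elem_lincomb_rows gr_elem_lincomb_cols)
    then have "N = card J"
      using J(2) gr_rank_lincomb_cols[of "{..<N}"] gr_rank_lincomb_cols[of J] by simp
    then show False
      using \<open>card J < N\<close> by simp
  qed
qed

end

theorem lemma4p17:
  fixes G :: "'a monoid" and c d :: "'a \<Rightarrow> 'k::division_ring"
    and M N :: nat and cs ds :: "nat \<Rightarrow> 'a" and r s :: "nat \<Rightarrow> 'k"
  assumes "group G" and "M \<ge> 2" and "N \<ge> 2"
    and "gr_elem G c" and "gr_elem G d"
    and "gr_rank c = M" and "gr_rank d = N"
    and "\<one>\<^bsub>G\<^esub> \<in> gr_supp c" and "\<one>\<^bsub>G\<^esub> \<in> gr_supp d"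
    and "gr_mult G c d = gr_one G"
    and "\<forall>i<M. cs i \<in> carrier G" and "inj_on cs {..<M}"
    and "\<forall>j<N. ds j \<in> carrier G" and "inj_on ds {..<N}"
    and "\<forall>i<M. r i \<noteq> 0" and "\<forall>j<N. s j \<noteq> 0"
    and "cs 0 = \<one>\<^bsub>G\<^esub>" and "ds 0 = \<one>\<^bsub>G\<^esub>"
    and "\<forall>g. c g = (\<Sum>i<M. if cs i = g then r i else 0)"
    and "\<forall>g. d g = (\<Sum>j<N. if ds j = g then s j else 0)"
  shows
    "((\<forall>m. 2 \<le> m \<and> m < M \<longrightarrow> (\<forall>G' :: nat monoid. group G' \<longrightarrow> gr_df TYPE('k) G' m N)) \<longrightarrow>
        row_connected M (sigma_part G M N cs ds) \<and>
        (\<forall>\<pi>. partition_on ({..<M} \<times> {..<N}) \<pi> \<and> part_le \<pi> (sigma_part G M N cs ds)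
              \<and> realizable \<pi> r s \<longrightarrow> row_connected M \<pi>))
   \<and> ((\<forall>n. 2 \<le> n \<and> n < N \<longrightarrow> (\<forall>G' :: nat monoid. group G' \<longrightarrow> gr_df TYPE('k) G' M n)) \<longrightarrow>
        col_connected N (sigma_part G M N cs ds) \<and>
        (\<forall>\<pi>. partition_on ({..<M} \<times> {..<N}) \<pi> \<and> part_le \<pi> (sigma_part G M N cs ds)
              \<and> realizable \<pi> r s \<longrightarrow> col_connected N \<pi>))"
proof -
  have "c = gr_lincomb {..<M} cs r" and "d = gr_lincomb {..<N} ds s"
    using assms(19,20) by (auto simp: gr_lincomb_def)
  then interpret unit_pair G M N cs ds r s
    using assms(1-3,10-18) by (simp add: unit_pair_def unit_pair_axioms_def)
  have "part_le \<sigma> \<sigma>"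
    unfolding part_le_def by blast
  then show ?thesis
    using row_connected_if_realizable col_connected_if_realizable
      partition_sigma realizable_sigma by blast
qed

end
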